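(* Let $c_p>0$, let $\mathcal{T}=\{\tau_1,\dots,\tau_m\}$ be a finite set of keep-alive window lengths in $[0,\infty]$, let $n\ge 0$ and let $x_1,\dots,x_n>0$ be any inter-arrival times with history $\mathcal{H}_n=(x_1,\dots,x_n)$. For a report $\hat\theta\ge 0$, let $\tau_{\hat\theta,\mathcal{H}_n}$ be the random window length chosen by the exponentially weighted average custom policy (defined in the context). Then for every threshold $x>0$, the function $$\hat\theta\;\mapsto\;\Pr\big(\tau_{\hat\theta,\mathcal{H}_n}<x\big)=\sum_{\tau_j\in\mathcal{T},\ \tau_j<x}\frac{e^{-L_n(\tau_j,\mathcal{H}_n,\hat\theta)}}{\sum_{\tau_k\in\mathcal{T}}e^{-L_n(\tau_k,\mathcal{H}_n,\hat\theta)}}$$ is monotonically non-increasing on $[0,\infty)$, i.e. $\frac{\partial}{\partial\hat\theta}\Pr(\tau_{\hat\theta,\mathcal{H}_n}<x)\le 0$. In particular, the probability that the policy produces a cold start on an arrival with inter-arrival time $x$ (namely $\Pr(\tau_{\hat\theta,\mathcal{H}_n}<x)$) is non-increasing in the reported cold-start cost $\hat\theta$.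
   Context: Keep-alive (TTL) caching model. A cost $c_p>0$ per unit time is incurred for keeping an application in cache. For a window length $\tau\in[0,\infty]$ and an inter-arrival time $x>0$: the cold-start indicator is $cs(\tau,x)=0$ if $x\le\tau$ and $cs(\tau,x)=1$ if $x>\tau$; the wasted-memory cost is $wm(\tau,x)=c_p x$ if $x\le \tau$ and $wm(\tau,x)=c_p\tau$ if $x>\tau$ (so $wm(\infty,x)=c_px$, $cs(\infty,x)=0$). For a history of inter-arrival times $\mathcal{H}_n=(x_1,\dots,x_n)$, a fixed window $\tau$ and a parameter $\theta\ge0$, the cumulative loss is $L_n(\tau,\mathcal{H}_n,\theta)=\sum_{j=1}^n wm(\tau,x_j)+\theta\sum_{j=1}^n cs(\tau,x_j)$. The exponentially weighted average custom policy with finite expert set $\mathcal{T}$, given report $\hat\theta$ and history $\mathcal{H}_n$, chooses $\tau_j\in\mathcal{T}$ with probability $\Pr(\tau_{\hat\theta,\mathcal{H}_n}=\tau_j)=e^{-L_n(\tau_j,\mathcal{H}_n,\hat\theta)}/\sum_{\tau_k\in\mathcal{T}}e^{-L_n(\tau_k,\mathcal{H}_n,\hat\theta)}$. *)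

theory Defs
  imports "HOL-Analysis.Analysis"
begin

text \<open>Window lengths live in [0,\<infinity>], modelled as extended reals (ereal) that are \<ge> 0.\<close>

definition cs :: "ereal \<Rightarrow> real \<Rightarrow> real" where
  "cs \<tau> x = (if ereal x \<le> \<tau> then 0 else 1)"

definition wm :: "real \<Rightarrow> ereal \<Rightarrow> real \<Rightarrow> real" where
  "wm cp \<tau> x = (if ereal x \<le> \<tau> then cp * x else cp * real_of_ereal \<tau>)"

definition cum_loss :: "real \<Rightarrow> ereal \<Rightarrow> real list \<Rightarrow> real \<Rightarrow> real" where
  "cum_loss cp \<tau> H \<theta> = (\<Sum>x\<leftarrow>H. wm cp \<tau> x) + \<theta> * (\<Sum>x\<leftarrow>H. cs \<tau> x)"

definition ewa_prob :: "real \<Rightarrow> ereal set \<Rightarrow> real list \<Rightarrow> real \<Rightarrow> ereal \<Rightarrow> real" where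
  "ewa_prob cp T H \<theta> \<tau> =
     exp (- cum_loss cp \<tau> H \<theta>) / (\<Sum>\<tau>k\<in>T. exp (- cum_loss cp \<tau>k H \<theta>))"

definition prob_window_less :: "real \<Rightarrow> ereal set \<Rightarrow> real list \<Rightarrow> real \<Rightarrow> real \<Rightarrow> real" where
  "prob_window_less cp T H \<theta> x = (\<Sum>\<tau>\<in>{\<tau>\<in>T. \<tau> < ereal x}. ewa_prob cp T H \<theta> \<tau>)"

end

theory Submission
  imports Defs
begin

text \<open>Raising the reported cost \<open>\<theta>\<close> multiplies the weight \<open>exp (- L\<^sub>n(\<tau>, \<H>\<^sub>n, \<theta>))\<close> of
  each window by \<open>exp (- \<theta> \<cdot> #cold starts of \<tau>)\<close>, and the number of cold starts decreases
  with \<open>\<tau>\<close>. Hence the weights of short windows shrink relative to those of long windows: for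
  \<open>\<sigma> \<le> \<tau>\<close> and \<open>\<theta>\<^sub>1 \<le> \<theta>\<^sub>2\<close> the cross products satisfy
  \<open>w\<^sub>\<theta>\<^sub>2(\<sigma>) w\<^sub>\<theta>\<^sub>1(\<tau>) \<le> w\<^sub>\<theta>\<^sub>1(\<sigma>) w\<^sub>\<theta>\<^sub>2(\<tau>)\<close>. Summing this over \<open>\<sigma> < x \<le> \<tau>\<close> shows that the
  normalised mass of the lower set \<open>{\<tau> < x}\<close> can only decrease.\<close>

lemma sum_fraction_le_of_cross_le:
  fixes p q :: "'a \<Rightarrow> real"
  assumes "finite T" "A \<subseteq> T"
    and "0 < sum p T" "0 < sum q T"
    and cross: "\<And>a b. a \<in> A \<Longrightarrow> b \<in> T - A \<Longrightarrow> p a * q b \<le> q a * p b"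
  shows "sum p A / sum p T \<le> sum q A / sum q T"
proof -
  have split: "sum f T = sum f A + sum f (T - A)" for f :: "'a \<Rightarrow> real"
    using assms(1,2) by (metis sum.subset_diff add.commute)
  have "sum p A * sum q (T - A) = (\<Sum>a\<in>A. \<Sum>b\<in>T - A. p a * q b)"
    by (simp add: sum_product)
  also have "\<dots> \<le> (\<Sum>a\<in>A. \<Sum>b\<in>T - A. q a * p b)"
    using cross by (intro sum_mono) auto
  also have "\<dots> = sum q A * sum p (T - A)"
    by (simp add: sum_product)
  finally have "sum p A * sum q T \<le> sum q A * sum p T"
    by (simp add: split[of p] split[of q] algebra_simps)
  then show ?thesis
    using assms(3,4) by (simp add: divide_simps mult.commute)
qed

lemma cs_antimono: "\<sigma> \<le> \<tau> \<Longrightarrow> cs \<tau> y \<le> cs \<sigma> y"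
  unfolding cs_def by auto

lemma cold_starts_antimono: "\<sigma> \<le> \<tau> \<Longrightarrow> (\<Sum>y\<leftarrow>H. cs \<tau> y) \<le> (\<Sum>y\<leftarrow>H. cs \<sigma> y)"
  by (intro sum_list_mono cs_antimono)

lemma exp_cum_loss_cross_le:
  assumes "\<sigma> \<le> \<tau>" "\<theta>1 \<le> \<theta>2"
  shows "exp (- cum_loss cp \<sigma> H \<theta>2) * exp (- cum_loss cp \<tau> H \<theta>1)
       \<le> exp (- cum_loss cp \<sigma> H \<theta>1) * exp (- cum_loss cp \<tau> H \<theta>2)"
proof -
  have "(\<theta>2 - \<theta>1) * (\<Sum>y\<leftarrow>H. cs \<tau> y) \<le> (\<theta>2 - \<theta>1) * (\<Sum>y\<leftarrow>H. cs \<sigma> y)"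
    using assms by (intro mult_left_mono cold_starts_antimono) auto
  then have "- cum_loss cp \<sigma> H \<theta>2 - cum_loss cp \<tau> H \<theta>1
           \<le> - cum_loss cp \<sigma> H \<theta>1 - cum_loss cp \<tau> H \<theta>2"
    unfolding cum_loss_def by (simp add: algebra_simps)
  then show ?thesis
    by (simp flip: exp_add)
qed

lemma prob_window_less_eq_fraction:
  "prob_window_less cp T H \<theta> x =
     (\<Sum>\<tau>\<in>{\<tau>\<in>T. \<tau> < ereal x}. exp (- cum_loss cp \<tau> H \<theta>)) / (\<Sum>\<tau>\<in>T. exp (- cum_loss cp \<tau> H \<theta>))"
  unfolding prob_window_less_def ewa_prob_def by (simp add: sum_divide_distrib)

lemma sum_exp_cum_loss_pos:
  "finite T \<Longrightarrow> T \<noteq> {} \<Longrightarrow> 0 < (\<Sum>\<tau>\<in>T. exp (- cum_loss cp \<tau> H \<theta>))"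
  by (intro sum_pos) auto

theorem lemma5p1:
  fixes cp :: real and T :: "ereal set" and H :: "real list" and x :: real
  assumes "cp > 0"
    and "finite T" and "T \<noteq> {}" and "\<forall>\<tau>\<in>T. 0 \<le> \<tau>"
    and "\<forall>y\<in>set H. y > 0"
    and "x > 0"
  shows "\<forall>\<theta>1 \<theta>2. 0 \<le> \<theta>1 \<longrightarrow> \<theta>1 \<le> \<theta>2 \<longrightarrow>
           prob_window_less cp T H \<theta>2 x \<le> prob_window_less cp T H \<theta>1 x"
proof (intro allI impI)
  fix \<theta>1 \<theta>2 :: real
  assume "\<theta>1 \<le> \<theta>2"
  have "\<sigma> \<le> \<tau>" if "\<sigma> \<in> {\<tau>\<in>T. \<tau> < ereal x}" "\<tau> \<in> T - {\<tau>\<in>T. \<tau> < ereal x}" for \<sigma> \<tau>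
    using that by auto
  then show "prob_window_less cp T H \<theta>2 x \<le> prob_window_less cp T H \<theta>1 x"
    unfolding prob_window_less_eq_fraction
    using \<open>\<theta>1 \<le> \<theta>2\<close> assms(2,3)
    by (intro sum_fraction_le_of_cross_le sum_exp_cum_loss_pos exp_cum_loss_cross_le) auto
qed

end
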